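(* Let $N\ge 2$ and $R\ge 3$. For every deterministic online algorithm for routing in the Clos network $C_{N,R}$, there is a sequence of flows, each with demand $1$ (and satisfying the demand assumption below), for which the routing returned by the algorithm has congestion at least $2$.
   Context: Clos network $C_{N,R}$: a directed graph with $N$ middle switches $M_1,\dots,M_N$, $R$ input switches $I_1,\dots,I_R$, $R$ output switches $O_1,\dots,O_R$, source servers $s_i^k$ and destination servers $t_i^k$ ($i\in[R]$, $k\in[N]$), and edges $s_i^kI_i$, $I_iM_m$, $M_mO_i$, $O_it_i^k$ for all $i\in[R]$, $m,k\in[N]$; all links have capacity $1$. A flow $f$ has a source server $s(f)$ of input switch $I_{i(f)}$, a destination server $t(f)$ of output switch $O_{j(f)}$, and a positive demand $\mathrm{dem}(f)$; a set of flows must have total demand at most $1$ leaving each source server and entering each destination server (so with unit demands, at most one flow per source server and per destination server). A routing $r$ assigns each flow a single middle switch $r(f)\in[N]$; its congestion is $\max_{i\in[R],m\in[N]}\max\{\sum_{f:i(f)=i,r(f)=m}\mathrm{dem}(f),\ \sum_{f:j(f)=i,r(f)=m}\mathrm{dem}(f)\}$. A deterministic online algorithm receives flows one at a time and must irrevocably assign each flow a middle switch before seeing the next; formally it defines a routing for every sequence of flows such that for every prefix $P$ of a sequence $F$, the routing of $P$ when given $P$ equals the routing of $P$ when given $F$. *)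

theory Defs
  imports Main
begin

text \<open>Clos network C_{N,R}, with 0-based indices: input/output switches i < R,
middle switches m < N, servers indexed by (switch, k) with k < N.
A unit-demand flow is given by its source server (i, k) (server s_i^k of input
switch I_i) and its destination server (j, l) (server t_j^l of output switch O_j).\<close>

type_synonym flow = "(nat \<times> nat) \<times> (nat \<times> nat)"

definition in_switch :: "flow \<Rightarrow> nat" where
  "in_switch f = fst (fst f)"

definition out_switch :: "flow \<Rightarrow> nat" where
  "out_switch f = fst (snd f)"

definition valid_flows :: "nat \<Rightarrow> nat \<Rightarrow> flow list \<Rightarrow> bool" where
  "valid_flows N R F \<longleftrightarrow>
     (\<forall>f\<in>set F. fst (fst f) < R \<and> snd (fst f) < N \<and> fst (snd f) < R \<and> snd (snd f) < N)
     \<and> distinct (map fst F) \<and> distinct (map snd F)"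

text \<open>A routing of a flow sequence F is a list r of middle switches, r ! p being
the middle switch of the p-th flow. Congestion with unit demands.\<close>

definition congestion :: "nat \<Rightarrow> nat \<Rightarrow> flow list \<Rightarrow> nat list \<Rightarrow> nat" where
  "congestion N R F r =
     Max {max (card {p. p < length F \<and> in_switch (F ! p) = i \<and> r ! p = m})
              (card {p. p < length F \<and> out_switch (F ! p) = i \<and> r ! p = m})
          | i m. i < R \<and> m < N}"

text \<open>A deterministic online algorithm: assigns a routing to every (valid) flow
sequence, such that the routing of each prefix is the restriction of the routing
of the whole sequence.\<close>

definition online_algorithm :: "nat \<Rightarrow> nat \<Rightarrow> (flow list \<Rightarrow> nat list) \<Rightarrow> bool" where
  "online_algorithm N R A \<longleftrightarrow>
     (\<forall>F. valid_flows N R F \<longrightarrow>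
        length (A F) = length F \<and> (\<forall>m\<in>set (A F). m < N) \<and>
        (\<forall>n. A (take n F) = take n (A F)))"

end

theory Submission
  imports Defs
begin

text \<open>Let n = N - 1. The adversary first sends n flows from I_0 to O_1 and n flows
from I_1 to O_2. With congestion below 2, flows sharing a switch use distinct middle
switches, so each of the two bundles occupies all middle switches but one. The algorithm
cannot then keep congestion below 2 on both of the following continuations: a flow from
I_0 to O_2 must avoid both bundles, so the two bundles miss the same middle switch; but
flows from I_0 and from I_1 to O_0 need two distinct middle switches, missed by the first
and by the second bundle respectively.\<close>

lemma load_le_congestion:
  assumes "sw = in_switch \<or> sw = out_switch" and "i < R" and "m < N"
  shows "card {p. p < length F \<and> sw (F ! p) = i \<and> r ! p = m} \<le> congestion N R F r"
proof -
  let ?load = "\<lambda>i m. max (card {p. p < length F \<and> in_switch (F ! p) = i \<and> r ! p = m})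
                          (card {p. p < length F \<and> out_switch (F ! p) = i \<and> r ! p = m})"
  have loads: "{?load i m | i m. i < R \<and> m < N} = (\<lambda>(i, m). ?load i m) ` ({..<R} \<times> {..<N})"
    by auto
  have "?load i m \<in> (\<lambda>(i, m). ?load i m) ` ({..<R} \<times> {..<N})"
    using assms(2,3) by force
  then have "?load i m \<le> congestion N R F r"
    unfolding congestion_def loads by (intro Max_ge) simp_all
  then show ?thesis
    using assms(1) by auto
qed

lemma routing_separates_shared_switch:
  assumes "congestion N R F r < 2" and "valid_flows N R F"
    and "sw = in_switch \<or> sw = out_switch"
    and "p < length F" "q < length F" "p \<noteq> q" "sw (F ! p) = sw (F ! q)" "r ! p < N"
  shows "r ! p \<noteq> r ! q"
proof
  assume same_middle: "r ! p = r ! q"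
  have "sw (F ! p) < R"
    using assms(2-4) nth_mem[OF assms(4)] unfolding valid_flows_def in_switch_def out_switch_def
    by blast
  have "card {p, q} \<le> card {x. x < length F \<and> sw (F ! x) = sw (F ! p) \<and> r ! x = r ! p}"
    using assms(4,5,7) same_middle by (intro card_mono) auto
  also have "\<dots> \<le> congestion N R F r"
    using load_le_congestion[OF assms(3) \<open>sw (F ! p) < R\<close> assms(8)] .
  finally show False
    using assms(1,6) by simp
qed

lemma card_middles_of_shared_switch:
  assumes "congestion N R F r < 2" and "valid_flows N R F"
    and "sw = in_switch \<or> sw = out_switch"
    and "\<And>p. p \<in> P \<Longrightarrow> p < length F" "\<And>p. p \<in> P \<Longrightarrow> sw (F ! p) = i"
    and "\<And>p. p \<in> P \<Longrightarrow> r ! p < N"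
  shows "card ((!) r ` P) = card P"
proof (intro card_image inj_onI)
  fix p q assume "p \<in> P" "q \<in> P" "r ! p = r ! q"
  then show "p = q"
    using routing_separates_shared_switch[OF assms(1-3)] assms(4-6) by blast
qed

lemma online_algorithm_nth_append:
  assumes "online_algorithm N R A" and "valid_flows N R (F @ G)" and "j < length F"
  shows "A (F @ G) ! j = A F ! j"
proof -
  have "A F = take (length F) (A (F @ G))"
    using assms(1,2) unfolding online_algorithm_def by (metis append_eq_conv_conj)
  then show ?thesis
    using assms(3) by simp
qed

lemma online_algorithm_nth_less:
  assumes "online_algorithm N R A" and "valid_flows N R F" and "p < length F"
  shows "A F ! p < N"
  using assms unfolding online_algorithm_def by (metis nth_mem)

lemma online_algorithm_new_middle_notin:
  assumes "online_algorithm N R A" and "valid_flows N R (F @ G)"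
    and "congestion N R (F @ G) (A (F @ G)) < 2" and "sw = in_switch \<or> sw = out_switch"
    and "\<And>p. p \<in> P \<Longrightarrow> p < length F" "\<And>p. p \<in> P \<Longrightarrow> sw (F ! p) = sw (G ! q)"
    and "q < length G"
  shows "A (F @ G) ! (length F + q) \<notin> (!) (A F) ` P"
proof
  assume "A (F @ G) ! (length F + q) \<in> (!) (A F) ` P"
  then obtain p where p: "p \<in> P" "A (F @ G) ! (length F + q) = A F ! p"
    by auto
  have "p < length F"
    using p(1) by (rule assms(5))
  have "A (F @ G) ! p \<noteq> A (F @ G) ! (length F + q)"
    using p(1) \<open>p < length F\<close> assms(6,7)
    by (intro routing_separates_shared_switch[OF assms(3,2,4)]
        online_algorithm_nth_less[OF assms(1,2)]) (auto simp: nth_append)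
  then show False
    using p(2) online_algorithm_nth_append[OF assms(1,2) \<open>p < length F\<close>] by simp
qed

definition parallel_flows :: "nat \<Rightarrow> nat \<Rightarrow> nat \<Rightarrow> flow list" where
  "parallel_flows i j n = map (\<lambda>k. ((i, k), (j, k))) [0..<n]"

definition base_flows :: "nat \<Rightarrow> flow list" where
  "base_flows n = parallel_flows 0 1 n @ parallel_flows 1 2 n"

lemma length_base_flows [simp]: "length (base_flows n) = 2 * n"
  by (simp add: base_flows_def parallel_flows_def)

lemma base_flows_nth_first:
  "p < n \<Longrightarrow> base_flows n ! p = ((0, p), (1, p))"
  by (simp add: base_flows_def parallel_flows_def nth_append)

lemma base_flows_nth_second:
  "n \<le> p \<Longrightarrow> p < 2 * n \<Longrightarrow> base_flows n ! p = ((1, p - n), (2, p - n))"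
  by (auto simp: base_flows_def parallel_flows_def nth_append)

lemma valid_base_flows:
  assumes "n < N" and "3 \<le> R"
  shows "valid_flows N R (base_flows n)"
    and "valid_flows N R (base_flows n @ [((0, n), (2, n))])"
    and "1 < N \<Longrightarrow> valid_flows N R (base_flows n @ [((0, n), (0, 0)), ((1, n), (0, 1))])"
  using assms
  by (auto simp: valid_flows_def base_flows_def parallel_flows_def distinct_map inj_on_def)

context
  fixes N R n :: nat and A :: "flow list \<Rightarrow> nat list"
  assumes online: "online_algorithm N R A" and three_switches: "3 \<le> R" and "n < N"
begin

lemma base_middles:
  assumes "congestion N R (base_flows n) (A (base_flows n)) < 2"
  shows "card ((!) (A (base_flows n)) ` {..<n}) = n"
    and "card ((!) (A (base_flows n)) ` {n..<2 * n}) = n"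
    and "(!) (A (base_flows n)) ` {..<n} \<subseteq> {..<N}"
    and "(!) (A (base_flows n)) ` {n..<2 * n} \<subseteq> {..<N}"
proof -
  note valid = valid_base_flows(1)[OF \<open>n < N\<close> three_switches]
  note in_range = online_algorithm_nth_less[OF online valid]
  show "card ((!) (A (base_flows n)) ` {..<n}) = n"
    using card_middles_of_shared_switch[OF assms valid, of in_switch "{..<n}" 0] in_range
    by (simp add: base_flows_nth_first in_switch_def)
  have "card ((!) (A (base_flows n)) ` {n..<2 * n}) = card {n..<2 * n}"
    using in_range
    by (intro card_middles_of_shared_switch[OF assms valid, of in_switch _ 1])
       (auto simp: base_flows_nth_second in_switch_def)
  then show "card ((!) (A (base_flows n)) ` {n..<2 * n}) = n"
    by simp
  show "(!) (A (base_flows n)) ` {..<n} \<subseteq> {..<N}"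
    and "(!) (A (base_flows n)) ` {n..<2 * n} \<subseteq> {..<N}"
    using in_range by auto
qed

lemma middle_outside_both_bundles:
  assumes "congestion N R (base_flows n @ [((0, n), (2, n))])
             (A (base_flows n @ [((0, n), (2, n))])) < 2"
  shows "\<exists>c<N. c \<notin> (!) (A (base_flows n)) ` {..<n}
              \<and> c \<notin> (!) (A (base_flows n)) ` {n..<2 * n}"
proof (intro exI conjI)
  let ?F = "base_flows n @ [((0, n), (2, n))]"
  note valid = valid_base_flows(2)[OF \<open>n < N\<close> three_switches]
  note notin = online_algorithm_new_middle_notin[OF online valid assms]
  show "A ?F ! (2 * n) < N"
    using online_algorithm_nth_less[OF online valid] by simp
  show "A ?F ! (2 * n) \<notin> (!) (A (base_flows n)) ` {..<n}"
    using notin[of in_switch "{..<n}" 0] by (simp add: base_flows_nth_first in_switch_def)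
  show "A ?F ! (2 * n) \<notin> (!) (A (base_flows n)) ` {n..<2 * n}"
    using notin[of out_switch "{n..<2 * n}" 0] by (auto simp: base_flows_nth_second out_switch_def)
qed

lemma distinct_middles_outside_bundles:
  assumes "1 < N"
    and "congestion N R (base_flows n @ [((0, n), (0, 0)), ((1, n), (0, 1))])
           (A (base_flows n @ [((0, n), (0, 0)), ((1, n), (0, 1))])) < 2"
  shows "\<exists>a<N. \<exists>b<N. a \<noteq> b \<and> a \<notin> (!) (A (base_flows n)) ` {..<n}
                         \<and> b \<notin> (!) (A (base_flows n)) ` {n..<2 * n}"
proof (intro exI conjI)
  let ?F = "base_flows n @ [((0, n), (0, 0)), ((1, n), (0, 1))]"
  note valid = valid_base_flows(3)[OF \<open>n < N\<close> three_switches \<open>1 < N\<close>]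
  note in_range = online_algorithm_nth_less[OF online valid]
  note notin = online_algorithm_new_middle_notin[OF online valid assms(2)]
  show "A ?F ! (2 * n) < N" "A ?F ! (2 * n + 1) < N"
    using in_range by simp_all
  show "A ?F ! (2 * n) \<noteq> A ?F ! (2 * n + 1)"
    using in_range
    by (intro routing_separates_shared_switch[OF assms(2) valid, of out_switch])
       (auto simp: out_switch_def nth_append)
  show "A ?F ! (2 * n) \<notin> (!) (A (base_flows n)) ` {..<n}"
    using notin[of in_switch "{..<n}" 0] by (simp add: base_flows_nth_first in_switch_def)
  show "A ?F ! (2 * n + 1) \<notin> (!) (A (base_flows n)) ` {n..<2 * n}"
    using notin[of in_switch "{n..<2 * n}" 1] by (auto simp: base_flows_nth_second in_switch_def)
qed

end

lemma eq_Diff_singleton_if_card_Suc: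
  assumes "finite U" "S \<subseteq> U" "card U = Suc (card S)" "c \<in> U" "c \<notin> S"
  shows "S = U - {c}"
  using assms by (intro card_subset_eq) auto

theorem mainTheorem5:
  fixes N R :: nat and A :: "flow list \<Rightarrow> nat list"
  assumes "N \<ge> 2" and "R \<ge> 3" and "online_algorithm N R A"
  shows "\<exists>F. valid_flows N R F \<and> congestion N R F (A F) \<ge> 2"
proof (rule ccontr)
  assume "\<not> ?thesis"
  then have low: "\<And>F. valid_flows N R F \<Longrightarrow> congestion N R F (A F) < 2"
    by (meson not_le)
  define n where "n = N - 1"
  have "n < N" "1 < N" "N = Suc n"
    using assms(1) by (auto simp: n_def)
  note valid = valid_base_flows[OF \<open>n < N\<close> assms(2)]
  let ?first = "(!) (A (base_flows n)) ` {..<n}"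
  let ?second = "(!) (A (base_flows n)) ` {n..<2 * n}"
  note middles = base_middles[OF assms(3,2) \<open>n < N\<close> low[OF valid(1)]]
  obtain c where "c < N" "c \<notin> ?first" "c \<notin> ?second"
    using middle_outside_both_bundles[OF assms(3,2) \<open>n < N\<close> low[OF valid(2)]] by blast
  obtain a b where "a < N" "b < N" "a \<noteq> b" "a \<notin> ?first" "b \<notin> ?second"
    using distinct_middles_outside_bundles[OF assms(3,2) \<open>n < N\<close> \<open>1 < N\<close>
        low[OF valid(3)[OF \<open>1 < N\<close>]]]
    by blast
  have "?first = {..<N} - {c}" "?second = {..<N} - {c}"
    using \<open>c < N\<close> \<open>c \<notin> ?first\<close> \<open>c \<notin> ?second\<close> middles \<open>N = Suc n\<close>
    by (simp_all add: eq_Diff_singleton_if_card_Suc)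
  then show False
    using \<open>a < N\<close> \<open>b < N\<close> \<open>a \<noteq> b\<close> \<open>a \<notin> ?first\<close> \<open>b \<notin> ?second\<close> by auto
qed

end
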